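(* Let $c>0$, let $\nu,\tilde\nu$ be probability measures on $\mathbb R_+$ different from $\boldsymbol d_0$, and for $z\in\mathbb C_+$ let $(\delta(z),\tilde\delta(z))\in\mathbb C_+^2$ be the unique solution of $\delta = c\int \frac{t}{-z(1+\tilde\delta t)}\nu(dt)$, $\tilde\delta=\int\frac{t}{-z(1+\delta t)}\tilde\nu(dt)$. Then for $\ell=1,2$ the integrals $$\int\frac{t^\ell}{|1+\tilde\delta(z)t|^2}\,\nu(dt)\qquad\text{and}\qquad\int\frac{t^\ell}{|1+\delta(z)t|^2}\,\tilde\nu(dt)$$ are bounded on every bounded region $\mathcal R\subset\mathbb C_+$ lying at positive distance from the imaginary axis.
   Context: $\mathbb C_+=\{z:\Im z>0\}$, $\boldsymbol d_0$ is the Dirac mass at $0$; existence and uniqueness of the solution of the system in $\mathbb C_+^2$ is known. *)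

theory Defs
  imports "HOL-Probability.Probability"
begin

end

theory Submission
  imports Defs
begin

text \<open>
  Write \<open>a(M, w) = \<integral> t / (1 + w t) dM\<close> and \<open>F\<^sub>l(M, w) = \<integral> t\<^sup>l / \<bar>1 + w t\<bar>\<^sup>2 dM\<close>.
  Since \<open>Im a(M, w) = - Im w F\<^sub>2(M, w)\<close>, comparing imaginary parts in the two fixed-point
  equations yields \<open>\<bar>z\<bar>\<^sup>2 Im \<delta> = c Im z F\<^sub>1(\<nu>, \<delta>') + c F\<^sub>2(\<nu>, \<delta>') F\<^sub>2(\<nu>', \<delta>) Im \<delta>\<close>,
  hence \<open>c F\<^sub>2(\<nu>, \<delta>') F\<^sub>2(\<nu>', \<delta>) \<le> \<bar>z\<bar>\<^sup>2\<close>. As \<open>\<nu>' \<noteq> d\<^sub>0\<close>, the factor \<open>F\<^sub>2(\<nu>', \<delta>)\<close>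
  is bounded below as long as \<open>\<delta>\<close> stays bounded, which bounds \<open>F\<^sub>2(\<nu>, \<delta>')\<close>, and
  \<open>F\<^sub>1 \<le> 4\<sigma> + F\<^sub>2/\<sigma>\<close> bounds \<open>F\<^sub>1\<close>. So everything reduces to bounding \<open>\<delta>\<close> and \<open>\<delta>'\<close>
  on the region. If \<open>\<bar>\<delta>\<bar>\<close> were large, the product inequality would force \<open>\<bar>\<delta>'\<bar> = O(1/\<bar>\<delta>\<bar>)\<close>
  and \<open>F\<^sub>2(\<nu>, \<delta>') = O(\<bar>\<delta>\<bar>\<^sup>2)\<close>; splitting \<open>\<integral> \<bar>t / (1 + \<delta>' t)\<bar> d\<nu>\<close> at a threshold \<open>T\<close>
  with small \<open>\<nu>\<close>-tail then gives \<open>\<bar>a(\<nu>, \<delta>')\<bar> \<le> 2T + \<epsilon>\<bar>\<delta>\<bar>/(2c)\<close>, whereas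
  \<open>c \<bar>a(\<nu>, \<delta>')\<bar> = \<bar>z\<bar> \<bar>\<delta>\<bar> \<ge> \<epsilon> \<bar>\<delta>\<bar>\<close>. The distance \<open>\<epsilon>\<close> to the imaginary axis enters only
  through \<open>\<bar>z\<bar> \<ge> \<epsilon>\<close>.
\<close>

section \<open>Pointwise bounds for the kernel \<open>t / (1 + w t)\<close>\<close>

lemma Im_mult_le_norm_one_plus_mult_of_real:
  fixes w :: complex and t :: real
  shows "t * Im w \<le> cmod (1 + w * of_real t)"
  using abs_Im_le_cmod[of "1 + w * of_real t"] by (simp add: mult.commute abs_le_iff)

lemma norm_one_plus_mult_of_real_pos:
  fixes w :: complex and t :: real
  assumes "Im w > 0"
  shows "cmod (1 + w * of_real t) > 0"
proof -
  have "1 + w * of_real t \<noteq> 0"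
  proof (cases "t = 0")
    case False
    then have "Im (1 + w * of_real t) \<noteq> 0" using assms by simp
    then show ?thesis by (metis zero_complex.sel(2))
  qed simp
  then show ?thesis by simp
qed

lemma norm_one_plus_mult_of_real_ge_half:
  fixes w :: complex and t :: real
  assumes "t \<ge> 0" "cmod w * t \<le> 1/2"
  shows "cmod (1 + w * of_real t) \<ge> 1/2"
  using norm_triangle_ineq4[of "1 + w * of_real t" "w * of_real t"] assms
  by (simp add: norm_mult)

lemma kernel_sq_le_inverse_Im_sq:
  fixes w :: complex and t :: real
  assumes "Im w > 0"
  shows "t\<^sup>2 / (cmod (1 + w * of_real t))\<^sup>2 \<le> 1 / (Im w)\<^sup>2"
proof -
  have "\<bar>t * Im w\<bar> \<le> cmod (1 + w * of_real t)"
    using abs_Im_le_cmod[of "1 + w * of_real t"] by (simp add: mult.commute)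
  then have "(t * Im w)\<^sup>2 \<le> (cmod (1 + w * of_real t))\<^sup>2"
    by (metis abs_ge_zero power2_abs power_mono)
  then show ?thesis
    using norm_one_plus_mult_of_real_pos[OF assms, of t] assms
    by (simp add: field_simps)
qed

lemma norm_kernel_le_inverse_Im:
  fixes w :: complex and t :: real
  assumes "t \<ge> 0" "Im w > 0"
  shows "cmod (of_real t / (1 + w * of_real t)) \<le> 1 / Im w"
  using Im_mult_le_norm_one_plus_mult_of_real[of t w] norm_one_plus_mult_of_real_pos[OF assms(2), of t] assms
  by (simp add: norm_divide field_simps)

lemma norm_kernel_sq:
  fixes w :: complex and t :: real
  shows "(cmod (of_real t / (1 + w * of_real t)))\<^sup>2 = t\<^sup>2 / (cmod (1 + w * of_real t))\<^sup>2"
  by (simp add: norm_divide power_divide)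

lemma norm_kernel_le_tail_split:
  fixes w :: complex and t T l :: real
  assumes "t \<ge> 0" "T \<ge> 0" "l > 0" "cmod w * T \<le> 1/2"
  shows "cmod (of_real t / (1 + w * of_real t)) \<le>
     2 * T + indicator {x. T < x} t / (2 * l) + l / 2 * (t\<^sup>2 / (cmod (1 + w * of_real t))\<^sup>2)"
proof (cases "t \<le> T")
  case True
  have "cmod w * t \<le> 1/2"
    using assms(4) True by (meson mult_left_mono norm_ge_zero order_trans)
  then have "cmod (1 + w * of_real t) \<ge> 1/2"
    by (rule norm_one_plus_mult_of_real_ge_half[OF assms(1)])
  then have "cmod (of_real t / (1 + w * of_real t)) \<le> t / (1/2)"
    unfolding norm_divide norm_of_real abs_of_nonneg[OF assms(1)]
    using assms(1) by (intro divide_left_mono) auto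
  then have "cmod (of_real t / (1 + w * of_real t)) \<le> 2 * T"
    using True by simp
  then show ?thesis
    using assms(3) by (simp add: add_increasing2)
next
  case False
  define u where "u = cmod (of_real t / (1 + w * of_real t))"
  have "0 \<le> (l * u - 1)\<^sup>2" by simp
  then have "u \<le> 1 / (2 * l) + l / 2 * u\<^sup>2"
    using assms(3) by (simp add: field_simps power2_eq_square)
  then show ?thesis
    using False assms(2,3) unfolding u_def norm_kernel_sq by simp
qed

lemma kernel_sq_ge_of_le:
  fixes w :: complex and t s :: real
  assumes "0 < s" "s \<le> t" "Im w > 0"
  shows "s\<^sup>2 / (1 + cmod w * s)\<^sup>2 \<le> t\<^sup>2 / (cmod (1 + w * of_real t))\<^sup>2"
proof -
  have "s / (1 + cmod w * s) \<le> t / (1 + cmod w * t)"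
    using assms by (simp add: divide_simps algebra_simps add_pos_nonneg)
  also have "\<dots> \<le> t / cmod (1 + w * of_real t)"
    using norm_triangle_ineq[of 1 "w * of_real t"] norm_one_plus_mult_of_real_pos[OF assms(3), of t] assms
    by (intro divide_left_mono) (auto simp: norm_mult intro!: mult_pos_pos add_pos_nonneg)
  finally show ?thesis
    using assms by (simp add: power_divide[symmetric] power_mono)
qed

lemma kernel_le_first_moment_split:
  fixes w :: complex and t \<sigma> :: real
  assumes "t \<ge> 0" "\<sigma> > 0" "cmod w * \<sigma> \<le> 1/2"
  shows "t / (cmod (1 + w * of_real t))\<^sup>2 \<le> 4 * \<sigma> + (t\<^sup>2 / (cmod (1 + w * of_real t))\<^sup>2) / \<sigma>"
proof (cases "t \<le> \<sigma>")
  case True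
  have "cmod w * t \<le> 1/2"
    using assms(3) True by (meson mult_left_mono norm_ge_zero order_trans)
  then have "1/2 \<le> cmod (1 + w * of_real t)"
    by (rule norm_one_plus_mult_of_real_ge_half[OF assms(1)])
  then have "(1/2)\<^sup>2 \<le> (cmod (1 + w * of_real t))\<^sup>2"
    by (rule power_mono) simp
  then have "t / (cmod (1 + w * of_real t))\<^sup>2 \<le> t / (1/2)\<^sup>2"
    using assms(1) by (intro divide_left_mono) (auto intro!: mult_pos_pos)
  moreover have "0 \<le> (t\<^sup>2 / (cmod (1 + w * of_real t))\<^sup>2) / \<sigma>"
    using assms(2) by simp
  ultimately show ?thesis
    using True by (simp add: power2_eq_square)
next
  case False
  then have "t / (cmod (1 + w * of_real t))\<^sup>2 = (t\<^sup>2 / (cmod (1 + w * of_real t))\<^sup>2) / t"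
    by (simp add: power2_eq_square)
  also have "\<dots> \<le> (t\<^sup>2 / (cmod (1 + w * of_real t))\<^sup>2) / \<sigma>"
    using False assms(2) by (intro divide_left_mono) auto
  finally show ?thesis
    using assms(2) by simp
qed

section \<open>Distributions on the half-line \<open>[0, \<infinity>)\<close>\<close>

lemma (in real_distribution) eq_return_if_AE_eq:
  assumes "AE x in M. x = a"
  shows "M = return borel a"
proof (rule measure_eqI)
  fix A assume "A \<in> sets M"
  then have "emeasure M A = (\<integral>\<^sup>+ x. indicator A x \<partial>M)"
    by simp
  also have "\<dots> = (\<integral>\<^sup>+ x. indicator A a \<partial>M)"
    using assms by (intro nn_integral_cong_AE) auto
  also have "\<dots> = emeasure (return borel a) A"
    using \<open>A \<in> sets M\<close> by (simp add: emeasure_space_1[simplified])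
  finally show "emeasure M A = emeasure (return borel a) A" .
qed simp

lemma (in real_distribution) tail_prob_le:
  assumes "\<eta> > 0"
  shows "\<exists>T>0. prob {x. T < x} \<le> \<eta>"
proof -
  have "\<forall>\<^sub>F T in at_top. 1 - \<eta> < cdf M T"
    using cdf_lim_at_top_prob by (rule order_tendstoD) (simp add: assms)
  moreover have "\<forall>\<^sub>F T in at_top. (0::real) < T"
    by (rule eventually_gt_at_top)
  ultimately have "\<forall>\<^sub>F T in at_top. 1 - \<eta> < cdf M T \<and> 0 < T"
    by (rule eventually_conj)
  then obtain T where T: "T > 0" "1 - \<eta> < cdf M T"
    by (auto simp: eventually_at_top_linorder)
  have "{x. T < x} = space M - {..T}"
    by auto
  then have "prob {x. T < x} = 1 - cdf M T"
    using prob_compl[of "{..T}"] by (simp add: cdf_def2)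
  then show ?thesis
    using T by (intro exI[of _ T]) auto
qed

definition resolvent_integral :: "real measure \<Rightarrow> complex \<Rightarrow> complex" where
  "resolvent_integral M w = (\<integral> t. of_real t / (1 + w * of_real t) \<partial>M)"

definition resolvent_moment :: "real measure \<Rightarrow> complex \<Rightarrow> nat \<Rightarrow> real" where
  "resolvent_moment M w l = (\<integral> t. t ^ l / (cmod (1 + w * of_real t))\<^sup>2 \<partial>M)"

locale nonneg_real_distribution = real_distribution +
  assumes AE_nonneg: "AE t in M. 0 \<le> t"
begin

lemma exists_pos_tail_prob:
  assumes "M \<noteq> return borel 0"
  shows "\<exists>s>0. 0 < prob {x. s \<le> x}"
proof (rule ccontr)
  assume no_tail: "\<not> ?thesis"
  have "prob {x. 1 / Suc n \<le> x} = 0" for n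
  proof -
    have "\<not> 0 < prob {x. 1 / Suc n \<le> x}"
      using no_tail by (metis of_nat_0_less_iff zero_less_Suc zero_less_divide_1_iff)
    then show ?thesis
      using measure_nonneg[of M "{x. 1 / Suc n \<le> x}"] by linarith
  qed
  then have "AE x in M. \<forall>n. x < 1 / Suc n"
    by (simp add: AE_all_countable prob_eq_0 not_le)
  then have "AE x in M. x = 0"
    using AE_nonneg
  proof eventually_elim
    case (elim x)
    show "x = 0"
    proof (rule ccontr)
      assume "x \<noteq> 0"
      then obtain n where "1 / Suc n < x"
        using elim(2) reals_Archimedean[of x] by (auto simp: inverse_eq_divide)
      then show False
        using elim(1) by (meson less_asym)
    qed
  qed
  then have "M = return borel 0"
    by (rule eq_return_if_AE_eq)
  with assms show False
    by contradiction
qed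

context
  fixes w :: complex
  assumes Im_pos: "Im w > 0"
begin

lemma integrable_resolvent_moment_2:
  "integrable M (\<lambda>t. t ^ 2 / (cmod (1 + w * of_real t))\<^sup>2)"
proof (rule integrable_const_bound)
  show "AE t in M. norm (t ^ 2 / (cmod (1 + w * of_real t))\<^sup>2) \<le> 1 / (Im w)\<^sup>2"
    using kernel_sq_le_inverse_Im_sq[OF Im_pos] by simp
qed measurable

lemma integrable_resolvent_moment_1:
  "integrable M (\<lambda>t. t ^ 1 / (cmod (1 + w * of_real t))\<^sup>2)"
proof (rule integrable_const_bound)
  define \<sigma> where "\<sigma> = 1 / (2 * (cmod w + 1))"
  have \<sigma>: "\<sigma> > 0" "cmod w * \<sigma> \<le> 1/2"
    unfolding \<sigma>_def by (simp_all add: add_pos_nonneg field_simps)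
  show "AE t in M. norm (t ^ 1 / (cmod (1 + w * of_real t))\<^sup>2) \<le> 4 * \<sigma> + 1 / (Im w)\<^sup>2 / \<sigma>"
    using AE_nonneg
  proof eventually_elim
    case (elim t)
    have "t / (cmod (1 + w * of_real t))\<^sup>2 \<le> 4 * \<sigma> + (t\<^sup>2 / (cmod (1 + w * of_real t))\<^sup>2) / \<sigma>"
      by (rule kernel_le_first_moment_split[OF elim \<sigma>])
    also have "\<dots> \<le> 4 * \<sigma> + 1 / (Im w)\<^sup>2 / \<sigma>"
      using \<sigma> by (intro add_left_mono divide_right_mono kernel_sq_le_inverse_Im_sq[OF Im_pos]) auto
    finally show ?case
      using elim by simp
  qed
qed measurable

lemma integrable_resolvent_kernel:
  "integrable M (\<lambda>t. of_real t / (1 + w * of_real t) :: complex)"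
proof (rule integrable_const_bound)
  show "AE t in M. norm (of_real t / (1 + w * of_real t) :: complex) \<le> 1 / Im w"
    using AE_nonneg by eventually_elim (rule norm_kernel_le_inverse_Im[OF _ Im_pos])
qed measurable

lemma Re_resolvent_integral:
  "Re (resolvent_integral M w) = resolvent_moment M w 1 + Re w * resolvent_moment M w 2"
proof -
  have "Re (resolvent_integral M w) = (\<integral> t. Re (of_real t / (1 + w * of_real t)) \<partial>M)"
    unfolding resolvent_integral_def using integrable_resolvent_kernel by simp
  also have "\<dots> = (\<integral> t. t ^ 1 / (cmod (1 + w * of_real t))\<^sup>2
      + Re w * (t ^ 2 / (cmod (1 + w * of_real t))\<^sup>2) \<partial>M)"
    by (simp add: Re_divide' power2_eq_square add_divide_distrib algebra_simps)
  also have "\<dots> = resolvent_moment M w 1 + Re w * resolvent_moment M w 2"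
    unfolding resolvent_moment_def integral_mult_right_zero[symmetric]
    by (intro Bochner_Integration.integral_add integrable_resolvent_moment_1
        integrable_mult_right integrable_resolvent_moment_2)
  finally show ?thesis .
qed

lemma Im_resolvent_integral:
  "Im (resolvent_integral M w) = - Im w * resolvent_moment M w 2"
proof -
  have "Im (resolvent_integral M w) = (\<integral> t. Im (of_real t / (1 + w * of_real t)) \<partial>M)"
    unfolding resolvent_integral_def using integrable_resolvent_kernel by simp
  also have "\<dots> = (\<integral> t. - Im w * (t ^ 2 / (cmod (1 + w * of_real t))\<^sup>2) \<partial>M)"
    by (simp add: Im_divide' power2_eq_square field_simps)
  finally show ?thesis
    unfolding resolvent_moment_def by (simp only: integral_mult_right_zero)
qed

lemma resolvent_moment_nonneg: "resolvent_moment M w l \<ge> 0"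
  unfolding resolvent_moment_def
  using AE_nonneg by (intro integral_nonneg_AE) (auto elim!: eventually_mono)

lemma nn_integral_resolvent_moment_le:
  assumes "l \<in> {1, 2}" "resolvent_moment M w l \<le> C"
  shows "(\<integral>\<^sup>+ t. ennreal (t ^ l / (cmod (1 + w * of_real t))\<^sup>2) \<partial>M) \<le> ennreal C"
proof -
  have "integrable M (\<lambda>t. t ^ l / (cmod (1 + w * of_real t))\<^sup>2)"
    using assms(1) integrable_resolvent_moment_1 integrable_resolvent_moment_2 by auto
  then have "(\<integral>\<^sup>+ t. ennreal (t ^ l / (cmod (1 + w * of_real t))\<^sup>2) \<partial>M) = ennreal (resolvent_moment M w l)"
    unfolding resolvent_moment_def
    by (rule nn_integral_eq_integral) (use AE_nonneg in \<open>auto elim!: eventually_mono\<close>)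
  then show ?thesis
    using assms(2) by (simp add: ennreal_leI)
qed

lemma norm_resolvent_integral_sq_le:
  "(cmod (resolvent_integral M w))\<^sup>2 \<le> resolvent_moment M w 2"
proof -
  let ?k = "\<lambda>t. cmod (of_real t / (1 + w * of_real t))"
  have int_k: "integrable M ?k"
    using integrable_resolvent_kernel by (rule integrable_norm)
  have int_k2: "integrable M (\<lambda>t. (?k t)\<^sup>2)"
    using integrable_resolvent_moment_2 by (simp only: norm_kernel_sq)
  have "cmod (resolvent_integral M w) \<le> expectation ?k"
    unfolding resolvent_integral_def by (rule integral_norm_bound)
  then have "(cmod (resolvent_integral M w))\<^sup>2 \<le> (expectation ?k)\<^sup>2"
    by (rule power_mono) simp
  also have "\<dots> \<le> expectation (\<lambda>t. (?k t)\<^sup>2)"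
    using variance_positive[of ?k] variance_eq[OF int_k int_k2] by simp
  also have "\<dots> = resolvent_moment M w 2"
    unfolding resolvent_moment_def norm_kernel_sq ..
  finally show ?thesis .
qed

lemma norm_resolvent_integral_le_tail:
  assumes "T \<ge> 0" "l > 0" "cmod w * T \<le> 1/2"
  shows "cmod (resolvent_integral M w) \<le> 2 * T + prob {x. T < x} / (2 * l) + l / 2 * resolvent_moment M w 2"
proof -
  let ?k2 = "\<lambda>t. t\<^sup>2 / (cmod (1 + w * of_real t))\<^sup>2"
  have int_tail: "integrable M (indicator {x. T < x} :: real \<Rightarrow> real)"
    by (simp add: integrable_indicator_iff emeasure_eq_measure)
  have "cmod (resolvent_integral M w) \<le> (\<integral> t. cmod (of_real t / (1 + w * of_real t)) \<partial>M)"
    unfolding resolvent_integral_def by (rule integral_norm_bound)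
  also have "\<dots> \<le> (\<integral> t. 2 * T + indicator {x. T < x} t / (2 * l) + l / 2 * ?k2 t \<partial>M)"
  proof (rule integral_mono_AE)
    show "integrable M (\<lambda>t. cmod (of_real t / (1 + w * of_real t)))"
      using integrable_resolvent_kernel by (rule integrable_norm)
    show "integrable M (\<lambda>t. 2 * T + indicator {x. T < x} t / (2 * l) + l / 2 * ?k2 t)"
      using int_tail integrable_resolvent_moment_2
      by (intro Bochner_Integration.integrable_add integrable_const integrable_divide_zero integrable_mult_right)
    show "AE t in M. cmod (of_real t / (1 + w * of_real t)) \<le> 2 * T + indicator {x. T < x} t / (2 * l) + l / 2 * ?k2 t"
      using AE_nonneg by eventually_elim (rule norm_kernel_le_tail_split[OF _ assms])
  qed
  also have "\<dots> = (\<integral> t. 2 * T + indicator {x. T < x} t / (2 * l) \<partial>M) + (\<integral> t. l / 2 * ?k2 t \<partial>M)"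
    using int_tail integrable_resolvent_moment_2
    by (intro Bochner_Integration.integral_add Bochner_Integration.integrable_add integrable_const
        integrable_divide_zero integrable_mult_right)
  also have "\<dots> = 2 * T + prob {x. T < x} / (2 * l) + l / 2 * resolvent_moment M w 2"
    unfolding resolvent_moment_def integral_mult_right_zero
    using int_tail by (simp add: prob_space[simplified] emeasure_eq_measure)
  finally show ?thesis .
qed

lemma tail_prob_le_resolvent_moment_2:
  assumes "s > 0"
  shows "prob {x. s \<le> x} * (s\<^sup>2 / (1 + cmod w * s)\<^sup>2) \<le> resolvent_moment M w 2"
proof -
  have "prob {x. s \<le> x} * (s\<^sup>2 / (1 + cmod w * s)\<^sup>2) =
      (\<integral> t. indicator {x. s \<le> x} t * (s\<^sup>2 / (1 + cmod w * s)\<^sup>2) \<partial>M)"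
    by (simp add: integral_mult_left_zero[symmetric] emeasure_eq_measure)
  also have "\<dots> \<le> resolvent_moment M w 2"
    unfolding resolvent_moment_def
  proof (rule integral_mono)
    show "integrable M (\<lambda>t. indicator {x. s \<le> x} t * (s\<^sup>2 / (1 + cmod w * s)\<^sup>2))"
      by (intro integrable_mult_left) (simp add: integrable_indicator_iff emeasure_eq_measure)
    fix t :: real
    show "indicator {x. s \<le> x} t * (s\<^sup>2 / (1 + cmod w * s)\<^sup>2) \<le> t ^ 2 / (cmod (1 + w * of_real t))\<^sup>2"
      using kernel_sq_ge_of_le[OF assms _ Im_pos, of t] by (cases "s \<le> t") auto
  qed (rule integrable_resolvent_moment_2)
  finally show ?thesis .
qed

lemma resolvent_moment_1_le:
  assumes "\<sigma> > 0" "cmod w * \<sigma> \<le> 1/2"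
  shows "resolvent_moment M w 1 \<le> 4 * \<sigma> + resolvent_moment M w 2 / \<sigma>"
proof -
  have "resolvent_moment M w 1 \<le> (\<integral> t. 4 * \<sigma> + (t\<^sup>2 / (cmod (1 + w * of_real t))\<^sup>2) / \<sigma> \<partial>M)"
    unfolding resolvent_moment_def
  proof (rule integral_mono_AE)
    show "integrable M (\<lambda>t. 4 * \<sigma> + (t\<^sup>2 / (cmod (1 + w * of_real t))\<^sup>2) / \<sigma>)"
      using integrable_resolvent_moment_2 by (intro Bochner_Integration.integrable_add integrable_const integrable_divide_zero)
    show "AE t in M. t ^ 1 / (cmod (1 + w * of_real t))\<^sup>2 \<le> 4 * \<sigma> + (t\<^sup>2 / (cmod (1 + w * of_real t))\<^sup>2) / \<sigma>"
      using AE_nonneg by eventually_elim (use kernel_le_first_moment_split[OF _ assms] in simp)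
  qed (rule integrable_resolvent_moment_1)
  also have "\<dots> = 4 * \<sigma> + resolvent_moment M w 2 / \<sigma>"
    unfolding resolvent_moment_def
    using integrable_resolvent_moment_2 by (simp only: Bochner_Integration.integral_add integrable_const
        integrable_divide_zero integral_divide_zero) (simp add: prob_space[simplified])
  finally show ?thesis .
qed

end

end

section \<open>The coupled fixed-point system at a single point \<open>z\<close>\<close>

text \<open>
  The system of the theorem, multiplied through by \<open>-z\<close>; it is the instance
  \<open>M1 = \<nu>, M2 = \<nu>', c1 = c, c2 = 1, d1 = \<delta> z, d2 = \<delta>' z\<close>. Keeping \<open>c2\<close> general
  makes the system symmetric under exchanging the two sides.
\<close>

locale coupled_solution =
  M1: nonneg_real_distribution M1 + M2: nonneg_real_distribution M2
  for M1 M2 :: "real measure" +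
  fixes c1 c2 :: real and z d1 d2 :: complex
  assumes c1_pos: "c1 > 0" and c2_pos: "c2 > 0"
    and Im_z_pos: "Im z > 0" and Im_d1_pos: "Im d1 > 0" and Im_d2_pos: "Im d2 > 0"
    and d1_eq: "- z * d1 = of_real c1 * resolvent_integral M1 d2"
    and d2_eq: "- z * d2 = of_real c2 * resolvent_integral M2 d1"
begin

lemma swapped: "coupled_solution M2 M1 c2 c1 z d2 d1"
  using c1_pos c2_pos Im_z_pos Im_d1_pos Im_d2_pos d1_eq d2_eq by unfold_locales

lemma norm_z_mult_norm_d1: "cmod z * cmod d1 = c1 * cmod (resolvent_integral M1 d2)"
  using arg_cong[OF d1_eq, of cmod] c1_pos by (simp add: norm_mult)

lemma norm_z_sq_mult_Im_d1:
  "(cmod z)\<^sup>2 * Im d1 = c1 * Im z * resolvent_moment M1 d2 1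
     + c1 * c2 * resolvent_moment M1 d2 2 * resolvent_moment M2 d1 2 * Im d1"
proof -
  have Im_z_d2: "Re z * Im d2 + Im z * Re d2 = c2 * Im d1 * resolvent_moment M2 d1 2"
    using arg_cong[OF d2_eq, of Im] M2.Im_resolvent_integral[OF Im_d1_pos] by simp
  have "Im (cnj z * (- z * d1)) = - (cmod z)\<^sup>2 * Im d1"
    using cmod_power2[of z] by (simp add: power2_eq_square algebra_simps)
  then have "(cmod z)\<^sup>2 * Im d1 = c1 * Im z * resolvent_moment M1 d2 1
      + c1 * resolvent_moment M1 d2 2 * (Re z * Im d2 + Im z * Re d2)"
    unfolding d1_eq
    using M1.Re_resolvent_integral[OF Im_d2_pos] M1.Im_resolvent_integral[OF Im_d2_pos]
    by (simp add: algebra_simps)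
  then show ?thesis
    unfolding Im_z_d2 by (simp add: algebra_simps)
qed

lemma moment_product_le:
  "c1 * c2 * resolvent_moment M1 d2 2 * resolvent_moment M2 d1 2 \<le> (cmod z)\<^sup>2"
proof -
  have "0 \<le> c1 * Im z * resolvent_moment M1 d2 1"
    using c1_pos Im_z_pos M1.resolvent_moment_nonneg[OF Im_d2_pos] by simp
  then have "c1 * c2 * resolvent_moment M1 d2 2 * resolvent_moment M2 d1 2 * Im d1 \<le> (cmod z)\<^sup>2 * Im d1"
    using norm_z_sq_mult_Im_d1 by linarith
  then show ?thesis
    using Im_d1_pos by simp
qed

lemma norm_z_pos: "cmod z > 0"
  using Im_z_pos by auto

lemma norm_d1_sq_mult_moment_le: "c2 * (cmod d1)\<^sup>2 * resolvent_moment M2 d1 2 \<le> c1"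
proof -
  have "(cmod z * cmod d1 / c1)\<^sup>2 \<le> resolvent_moment M1 d2 2"
    using norm_z_mult_norm_d1 c1_pos M1.norm_resolvent_integral_sq_le[OF Im_d2_pos] by simp
  then have "c1 * c2 * (cmod z * cmod d1 / c1)\<^sup>2 * resolvent_moment M2 d1 2
      \<le> c1 * c2 * resolvent_moment M1 d2 2 * resolvent_moment M2 d1 2"
    using c1_pos c2_pos M2.resolvent_moment_nonneg[OF Im_d1_pos]
    by (intro mult_right_mono mult_left_mono) auto
  also have "\<dots> \<le> (cmod z)\<^sup>2"
    by (rule moment_product_le)
  finally have "(cmod z)\<^sup>2 * (c2 * (cmod d1)\<^sup>2 * resolvent_moment M2 d1 2) \<le> (cmod z)\<^sup>2 * c1"
    using c1_pos by (simp add: power2_eq_square field_simps)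
  then show ?thesis
    using norm_z_pos by simp
qed

lemma norm_z_d1_d2_le: "cmod z * cmod d1 * cmod d2 \<le> sqrt (c1 * c2)"
proof -
  have "(cmod z * cmod d2)\<^sup>2 \<le> c2\<^sup>2 * resolvent_moment M2 d1 2"
    using coupled_solution.norm_z_mult_norm_d1[OF swapped] M2.norm_resolvent_integral_sq_le[OF Im_d1_pos] c2_pos
    by (simp add: power_mult_distrib)
  then have "(cmod d1)\<^sup>2 * (cmod z * cmod d2)\<^sup>2 \<le> (cmod d1)\<^sup>2 * (c2\<^sup>2 * resolvent_moment M2 d1 2)"
    by (rule mult_left_mono) simp
  then have "(cmod z * cmod d1 * cmod d2)\<^sup>2 \<le> c2 * (c2 * (cmod d1)\<^sup>2 * resolvent_moment M2 d1 2)"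
    by (simp add: power2_eq_square algebra_simps)
  also have "\<dots> \<le> c2 * c1"
    using norm_d1_sq_mult_moment_le c2_pos by simp
  finally show ?thesis
    by (simp add: real_le_rsqrt mult.commute)
qed

lemma resolvent_moment_2_le:
  assumes "0 < s" "0 < M2.prob {x. s \<le> x}"
  shows "resolvent_moment M1 d2 2 \<le> (cmod z)\<^sup>2 * (1 + cmod d1 * s)\<^sup>2 / (c1 * c2 * M2.prob {x. s \<le> x} * s\<^sup>2)"
proof -
  define \<beta> where "\<beta> = M2.prob {x. s \<le> x} * (s\<^sup>2 / (1 + cmod d1 * s)\<^sup>2)"
  have "1 + cmod d1 * s > 0"
    using assms(1) by (simp add: add_pos_nonneg)
  then have \<beta>: "\<beta> > 0"
    unfolding \<beta>_def using assms by simp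
  have "c1 * c2 * resolvent_moment M1 d2 2 * \<beta> \<le> c1 * c2 * resolvent_moment M1 d2 2 * resolvent_moment M2 d1 2"
    unfolding \<beta>_def using c1_pos c2_pos M1.resolvent_moment_nonneg[OF Im_d2_pos]
    by (intro mult_left_mono M2.tail_prob_le_resolvent_moment_2[OF Im_d1_pos assms(1)]) auto
  also have "\<dots> \<le> (cmod z)\<^sup>2"
    by (rule moment_product_le)
  finally have "resolvent_moment M1 d2 2 \<le> (cmod z)\<^sup>2 / (c1 * c2 * \<beta>)"
    using c1_pos c2_pos \<beta> by (simp add: field_simps)
  then show ?thesis
    using \<open>1 + cmod d1 * s > 0\<close> unfolding \<beta>_def by (simp add: field_simps)
qed

lemma resolvent_moment_2_le_if_large:
  assumes "cmod z \<le> K" "0 < s" "0 < M2.prob {x. s \<le> x}" "1 \<le> cmod d1 * s"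
  shows "resolvent_moment M1 d2 2 \<le> 4 * K\<^sup>2 * (cmod d1)\<^sup>2 / (c1 * c2 * M2.prob {x. s \<le> x})"
proof -
  define q where "q = M2.prob {x. s \<le> x}"
  have "(1 + cmod d1 * s)\<^sup>2 \<le> (2 * cmod d1 * s)\<^sup>2"
    using assms(4) by (intro power_mono) (auto simp: mult.commute)
  moreover have "(cmod z)\<^sup>2 \<le> K\<^sup>2"
    using assms(1) by (intro power_mono) auto
  ultimately have "(cmod z)\<^sup>2 * (1 + cmod d1 * s)\<^sup>2 \<le> K\<^sup>2 * (2 * cmod d1 * s)\<^sup>2"
    by (intro mult_mono) auto
  then have "(cmod z)\<^sup>2 * (1 + cmod d1 * s)\<^sup>2 / (c1 * c2 * q * s\<^sup>2)
      \<le> K\<^sup>2 * (2 * cmod d1 * s)\<^sup>2 / (c1 * c2 * q * s\<^sup>2)"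
    unfolding q_def using c1_pos c2_pos assms(3) by (intro divide_right_mono) auto
  also have "\<dots> = 4 * K\<^sup>2 * (cmod d1)\<^sup>2 / (c1 * c2 * q)"
    using assms(2) by (simp add: field_simps power2_eq_square)
  finally show ?thesis
    using resolvent_moment_2_le[OF assms(2,3)] unfolding q_def by linarith
qed

lemma norm_d2_mult_le_half:
  assumes "0 < \<epsilon>" "\<epsilon> \<le> cmod z" "0 \<le> T" "2 * T * sqrt (c1 * c2) \<le> \<epsilon> * cmod d1"
  shows "cmod d2 * T \<le> 1/2"
proof -
  have "\<epsilon> * cmod d1 * cmod d2 \<le> cmod z * cmod d1 * cmod d2"
    using assms(2) by (intro mult_right_mono) auto
  also have "\<dots> \<le> sqrt (c1 * c2)"
    by (rule norm_z_d1_d2_le)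
  finally have "T * (\<epsilon> * cmod d1 * cmod d2) \<le> T * sqrt (c1 * c2)"
    using assms(3) by (rule mult_left_mono)
  then have "cmod d2 * T * (\<epsilon> * cmod d1) \<le> T * sqrt (c1 * c2)"
    by (simp add: algebra_simps)
  also have "\<dots> \<le> 1/2 * (\<epsilon> * cmod d1)"
    using assms(4) by simp
  finally have "cmod d2 * T * (\<epsilon> * cmod d1) \<le> 1/2 * (\<epsilon> * cmod d1)" .
  moreover have "0 < cmod d1"
    using Im_d1_pos by auto
  then have "0 < \<epsilon> * cmod d1"
    using assms(1) by simp
  ultimately show ?thesis
    using mult_le_cancel_right_pos by blast
qed

lemma norm_d1_le_if_large:
  assumes z: "0 < \<epsilon>" "\<epsilon> \<le> cmod z" "cmod z \<le> K"
    and s: "0 < s" "0 < M2.prob {x. s \<le> x}" "1 \<le> cmod d1 * s"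
    and T: "0 \<le> T" "2 * T * sqrt (c1 * c2) \<le> \<epsilon> * cmod d1"
    and tail: "M1.prob {x. T < x} \<le> \<epsilon>\<^sup>2 * c2 * M2.prob {x. s \<le> x} / (16 * c1 * K\<^sup>2)"
  shows "cmod d1 \<le> 4 * c1 * T / \<epsilon>"
proof -
  define D where "D = cmod d1"
  define q where "q = M2.prob {x. s \<le> x}"
  define A where "A = resolvent_moment M1 d2 2"
  have D: "0 < D"
    unfolding D_def using Im_d1_pos by auto
  have K: "0 < K"
    using z by linarith
  have q: "0 < q"
    unfolding q_def using s by simp
  have A_le: "A \<le> 4 * K\<^sup>2 * D\<^sup>2 / (c1 * c2 * q)"
    unfolding A_def D_def q_def by (rule resolvent_moment_2_le_if_large[OF z(3) s])
  \<comment> \<open>chosen so that both error terms of the tail split are at most \<open>\<epsilon> D / (4 c1)\<close>\<close>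
  define l where "l = \<epsilon> * c2 * q / (8 * K\<^sup>2 * D)"
  have l: "0 < l"
    unfolding l_def using z(1) c2_pos q K D by simp
  have "cmod (resolvent_integral M1 d2) \<le> 2 * T + M1.prob {x. T < x} / (2 * l) + l / 2 * A"
    unfolding A_def
    by (rule M1.norm_resolvent_integral_le_tail[OF Im_d2_pos T(1) l norm_d2_mult_le_half[OF z(1,2) T]])
  also have "M1.prob {x. T < x} / (2 * l) \<le> \<epsilon> * D / (4 * c1)"
    using tail[folded q_def] l c1_pos K D z(1) c2_pos q unfolding l_def by (simp add: field_simps power2_eq_square)
  also have "l / 2 * A \<le> \<epsilon> * D / (4 * c1)"
  proof -
    have "l / 2 * A \<le> l / 2 * (4 * K\<^sup>2 * D\<^sup>2 / (c1 * c2 * q))"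
      using A_le l by (intro mult_left_mono) auto
    also have "\<dots> = \<epsilon> * D / (4 * c1)"
      unfolding l_def using K D q c1_pos c2_pos by (simp add: field_simps power2_eq_square)
    finally show ?thesis .
  qed
  finally have "cmod (resolvent_integral M1 d2) \<le> 2 * T + \<epsilon> * D / (2 * c1)"
    by (simp add: mult.commute)
  moreover have "\<epsilon> * D \<le> cmod z * D"
    using z(2) D by simp
  then have "\<epsilon> * D / c1 \<le> cmod (resolvent_integral M1 d2)"
    using norm_z_mult_norm_d1 c1_pos unfolding D_def by (simp add: field_simps)
  ultimately show ?thesis
    using z(1) c1_pos unfolding D_def by (simp add: field_simps)
qed

end

section \<open>Bounds uniform on a region\<close>

lemma uniformly_bounded_norm_d1:
  fixes d1 d2 :: "complex \<Rightarrow> complex"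
  assumes M2_ne: "M2 \<noteq> return borel 0"
    and sol: "\<And>z. z \<in> R \<Longrightarrow> coupled_solution M1 M2 c1 c2 z (d1 z) (d2 z)"
    and eps: "0 < \<epsilon>" and R: "\<And>z. z \<in> R \<Longrightarrow> \<epsilon> \<le> cmod z \<and> cmod z \<le> K"
  shows "\<exists>D. \<forall>z\<in>R. cmod (d1 z) \<le> D"
proof (cases "R = {}")
  case False
  then obtain z0 where z0: "z0 \<in> R"
    by blast
  interpret M1: nonneg_real_distribution M1
    using sol[OF z0] by (rule coupled_solution.axioms)
  interpret M2: nonneg_real_distribution M2
    using sol[OF z0] by (rule coupled_solution.axioms)
  have c: "0 < c1" "0 < c2"
    using sol[OF z0] by (simp_all add: coupled_solution.c1_pos coupled_solution.c2_pos)
  have K: "0 < K"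
    using R[OF z0] eps by linarith
  obtain s where s: "0 < s" "0 < M2.prob {x. s \<le> x}"
    using M2.exists_pos_tail_prob[OF M2_ne] by blast
  define \<eta> where "\<eta> = \<epsilon>\<^sup>2 * c2 * M2.prob {x. s \<le> x} / (16 * c1 * K\<^sup>2)"
  have "0 < \<eta>"
    unfolding \<eta>_def using eps s(2) K c by simp
  then obtain T where T: "0 < T" "M1.prob {x. T < x} \<le> \<eta>"
    using M1.tail_prob_le by blast
  show ?thesis
  proof (intro exI ballI)
    fix z assume "z \<in> R"
    interpret sol: coupled_solution M1 M2 c1 c2 z "d1 z" "d2 z"
      by (rule sol[OF \<open>z \<in> R\<close>])
    consider "cmod (d1 z) * s < 1" | "\<epsilon> * cmod (d1 z) < 2 * T * sqrt (c1 * c2)"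
      | "1 \<le> cmod (d1 z) * s" "2 * T * sqrt (c1 * c2) \<le> \<epsilon> * cmod (d1 z)"
      by linarith
    then show "cmod (d1 z) \<le> max (1 / s) (max (2 * T * sqrt (c1 * c2) / \<epsilon>) (4 * c1 * T / \<epsilon>))"
    proof cases
      case 1
      then have "cmod (d1 z) \<le> 1 / s"
        using s(1) by (simp add: field_simps)
      then show ?thesis
        by simp
    next
      case 2
      then have "cmod (d1 z) \<le> 2 * T * sqrt (c1 * c2) / \<epsilon>"
        using eps by (simp add: field_simps)
      then show ?thesis
        by simp
    next
      case 3
      have "cmod (d1 z) \<le> 4 * c1 * T / \<epsilon>"
        using R[OF \<open>z \<in> R\<close>] T(1)
        by (intro sol.norm_d1_le_if_large[OF eps _ _ s 3(1) _ 3(2) T(2)[unfolded \<eta>_def]]) auto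
      then show ?thesis
        by simp
    qed
  qed
qed simp

lemma uniformly_bounded_resolvent_moments:
  fixes d1 d2 :: "complex \<Rightarrow> complex"
  assumes M2_ne: "M2 \<noteq> return borel 0"
    and sol: "\<And>z. z \<in> R \<Longrightarrow> coupled_solution M1 M2 c1 c2 z (d1 z) (d2 z)"
    and R: "\<And>z. z \<in> R \<Longrightarrow> cmod z \<le> K"
    and d1: "\<And>z. z \<in> R \<Longrightarrow> cmod (d1 z) \<le> D1" and d2: "\<And>z. z \<in> R \<Longrightarrow> cmod (d2 z) \<le> D2"
  shows "\<exists>C. \<forall>z\<in>R. \<forall>l\<in>{1, 2}. resolvent_moment M1 (d2 z) l \<le> C"
proof (cases "R = {}")
  case False
  then obtain z0 where z0: "z0 \<in> R"
    by blast
  interpret M1: nonneg_real_distribution M1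
    using sol[OF z0] by (rule coupled_solution.axioms)
  interpret M2: nonneg_real_distribution M2
    using sol[OF z0] by (rule coupled_solution.axioms)
  have c: "0 < c1" "0 < c2"
    using sol[OF z0] by (simp_all add: coupled_solution.c1_pos coupled_solution.c2_pos)
  obtain s where s: "0 < s" "0 < M2.prob {x. s \<le> x}"
    using M2.exists_pos_tail_prob[OF M2_ne] by blast
  define A where "A = K\<^sup>2 * (1 + D1 * s)\<^sup>2 / (c1 * c2 * M2.prob {x. s \<le> x} * s\<^sup>2)"
  define \<sigma> where "\<sigma> = 1 / (2 * (D2 + 1))"
  have D2: "0 \<le> D2"
    using d2[OF z0] norm_ge_zero order_trans by blast
  have \<sigma>: "0 < \<sigma>"
    unfolding \<sigma>_def using D2 by simp
  have A: "0 \<le> A"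
    unfolding A_def using c s by simp
  show ?thesis
  proof (intro exI ballI)
    fix z and l :: nat assume "z \<in> R" "l \<in> {1, 2}"
    interpret sol: coupled_solution M1 M2 c1 c2 z "d1 z" "d2 z"
      by (rule sol[OF \<open>z \<in> R\<close>])
    have "(cmod z)\<^sup>2 * (1 + cmod (d1 z) * s)\<^sup>2 \<le> K\<^sup>2 * (1 + D1 * s)\<^sup>2"
      using R[OF \<open>z \<in> R\<close>] d1[OF \<open>z \<in> R\<close>] s(1)
      by (intro mult_mono power_mono add_left_mono mult_right_mono) auto
    then have "(cmod z)\<^sup>2 * (1 + cmod (d1 z) * s)\<^sup>2 / (c1 * c2 * M2.prob {x. s \<le> x} * s\<^sup>2) \<le> A"
      unfolding A_def using c s by (intro divide_right_mono) auto
    with sol.resolvent_moment_2_le[OF s]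
    have moment_2: "resolvent_moment M1 (d2 z) 2 \<le> A"
      by (rule order_trans)
    have "cmod (d2 z) * \<sigma> \<le> 1/2"
      using d2[OF \<open>z \<in> R\<close>] \<sigma> D2 unfolding \<sigma>_def by (simp add: field_simps)
    then have "resolvent_moment M1 (d2 z) 1 \<le> 4 * \<sigma> + resolvent_moment M1 (d2 z) 2 / \<sigma>"
      by (rule M1.resolvent_moment_1_le[OF sol.Im_d2_pos \<sigma>])
    also have "\<dots> \<le> 4 * \<sigma> + A / \<sigma>"
      using moment_2 \<sigma> by (intro add_left_mono divide_right_mono) auto
    finally have moment_1: "resolvent_moment M1 (d2 z) 1 \<le> 4 * \<sigma> + A / \<sigma>" .
    have "4 * \<sigma> + A / \<sigma> \<le> 4 * \<sigma> + A / \<sigma> + A" "A \<le> 4 * \<sigma> + A / \<sigma> + A"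
      using A \<sigma> by simp_all
    with \<open>l \<in> {1, 2}\<close> moment_1 moment_2
    show "resolvent_moment M1 (d2 z) l \<le> 4 * \<sigma> + A / \<sigma> + A"
      by (metis (mono_tags) empty_iff insertE order_trans)
  qed
qed simp

lemma integral_kernel_divide:
  "(\<integral> t. of_real t / (- z * (1 + w * of_real t)) \<partial>M) = resolvent_integral M w / - z"
proof -
  have "of_real t / (- z * (1 + w * of_real t)) = of_real t / (1 + w * of_real t) / - z" for t
    by (simp add: mult.commute)
  then show ?thesis
    unfolding resolvent_integral_def by (simp only: integral_divide_zero)
qed

lemma coupled_solutionI:
  assumes "nonneg_real_distribution M1" "nonneg_real_distribution M2"
    and "c1 > 0" "c2 > 0" "Im z > 0" "Im d1 > 0" "Im d2 > 0"
    and "d1 = of_real c1 * (\<integral> t. of_real t / (- z * (1 + d2 * of_real t)) \<partial>M1)"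
    and "d2 = of_real c2 * (\<integral> t. of_real t / (- z * (1 + d1 * of_real t)) \<partial>M2)"
  shows "coupled_solution M1 M2 c1 c2 z d1 d2"
proof -
  have "z \<noteq> 0"
    using assms(5) by auto
  have "- z * d1 = of_real c1 * resolvent_integral M1 d2"
    using assms(8) \<open>z \<noteq> 0\<close> unfolding integral_kernel_divide by simp
  moreover have "- z * d2 = of_real c2 * resolvent_integral M2 d1"
    using assms(9) \<open>z \<noteq> 0\<close> unfolding integral_kernel_divide by simp
  ultimately show ?thesis
    using assms(1-7) unfolding coupled_solution_def coupled_solution_axioms_def by blast
qed

lemma bounded_resolvent_moments_off_imaginary_axis:
  fixes d1 d2 :: "complex \<Rightarrow> complex"
  assumes M1_ne: "M1 \<noteq> return borel 0" and M2_ne: "M2 \<noteq> return borel 0"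
    and sol: "\<And>z. z \<in> R \<Longrightarrow> coupled_solution M1 M2 c1 c2 z (d1 z) (d2 z)"
    and "bounded R" and eps: "0 < \<epsilon>" "\<And>z. z \<in> R \<Longrightarrow> \<epsilon> \<le> \<bar>Re z\<bar>"
  shows "\<exists>C. \<forall>z\<in>R. \<forall>l\<in>{1, 2}. resolvent_moment M1 (d2 z) l \<le> C"
proof -
  obtain K where K: "\<And>z. z \<in> R \<Longrightarrow> cmod z \<le> K"
    using \<open>bounded R\<close> unfolding bounded_iff by blast
  have R: "\<epsilon> \<le> cmod z \<and> cmod z \<le> K" if "z \<in> R" for z
    using eps(2)[OF that] K[OF that] abs_Re_le_cmod[of z] by linarith
  obtain D1 where D1: "\<And>z. z \<in> R \<Longrightarrow> cmod (d1 z) \<le> D1"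
    using uniformly_bounded_norm_d1[OF M2_ne sol eps(1) R] by blast
  obtain D2 where D2: "\<And>z. z \<in> R \<Longrightarrow> cmod (d2 z) \<le> D2"
    using uniformly_bounded_norm_d1[OF M1_ne coupled_solution.swapped[OF sol] eps(1) R] by blast
  show ?thesis
    by (rule uniformly_bounded_resolvent_moments[OF M2_ne sol K D1 D2])
qed

lemma bounded_nn_resolvent_moments_off_imaginary_axis:
  fixes d1 d2 :: "complex \<Rightarrow> complex"
  assumes M1_ne: "M1 \<noteq> return borel 0" and M2_ne: "M2 \<noteq> return borel 0"
    and sol: "\<And>z. z \<in> R \<Longrightarrow> coupled_solution M1 M2 c1 c2 z (d1 z) (d2 z)"
    and R: "bounded R" "0 < \<epsilon>" "\<And>z. z \<in> R \<Longrightarrow> \<epsilon> \<le> \<bar>Re z\<bar>"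
  shows "\<exists>C. \<forall>z\<in>R. \<forall>l\<in>{1::nat, 2}.
           (\<integral>\<^sup>+ t. ennreal (t ^ l / (cmod (1 + d2 z * of_real t))\<^sup>2) \<partial>M1) \<le> ennreal C \<and>
           (\<integral>\<^sup>+ t. ennreal (t ^ l / (cmod (1 + d1 z * of_real t))\<^sup>2) \<partial>M2) \<le> ennreal C"
proof -
  obtain C1 where C1: "\<forall>z\<in>R. \<forall>l\<in>{1, 2}. resolvent_moment M1 (d2 z) l \<le> C1"
    using bounded_resolvent_moments_off_imaginary_axis[OF M1_ne M2_ne sol R] by blast
  obtain C2 where C2: "\<forall>z\<in>R. \<forall>l\<in>{1, 2}. resolvent_moment M2 (d1 z) l \<le> C2"
    using bounded_resolvent_moments_off_imaginary_axis[OF M2_ne M1_ne coupled_solution.swapped[OF sol] R]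
    by blast
  show ?thesis
  proof (intro exI[of _ "max C1 C2"] ballI conjI)
    fix z and l :: nat
    assume z: "z \<in> R" and l: "l \<in> {1, 2}"
    interpret coupled_solution M1 M2 c1 c2 z "d1 z" "d2 z"
      by (rule sol[OF z])
    show "(\<integral>\<^sup>+ t. ennreal (t ^ l / (cmod (1 + d2 z * of_real t))\<^sup>2) \<partial>M1) \<le> ennreal (max C1 C2)"
      using C1 z l by (intro M1.nn_integral_resolvent_moment_le[OF Im_d2_pos l] max.coboundedI1) blast
    show "(\<integral>\<^sup>+ t. ennreal (t ^ l / (cmod (1 + d1 z * of_real t))\<^sup>2) \<partial>M2) \<le> ennreal (max C1 C2)"
      using C2 z l by (intro M2.nn_integral_resolvent_moment_le[OF Im_d1_pos l] max.coboundedI2) blast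
  qed
qed

theorem lemma3p3:
  fixes c :: real and \<nu> \<nu>' :: "real measure"
    and \<delta> \<delta>' :: "complex \<Rightarrow> complex"
  assumes c_pos: "c > 0"
    and nu_prob: "prob_space \<nu>" and nu_sets: "sets \<nu> = sets borel"
    and nu_pos: "AE t in \<nu>. t \<ge> 0" and nu_ne: "\<nu> \<noteq> return borel 0"
    and nu'_prob: "prob_space \<nu>'" and nu'_sets: "sets \<nu>' = sets borel"
    and nu'_pos: "AE t in \<nu>'. t \<ge> 0" and nu'_ne: "\<nu>' \<noteq> return borel 0"
    and delta_im: "\<And>z. Im z > 0 \<Longrightarrow> Im (\<delta> z) > 0 \<and> Im (\<delta>' z) > 0"
    and delta_eq: "\<And>z. Im z > 0 \<Longrightarrow>
        \<delta> z = of_real c * (\<integral> t. of_real t / (- z * (1 + \<delta>' z * of_real t)) \<partial>\<nu>)"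
    and delta'_eq: "\<And>z. Im z > 0 \<Longrightarrow>
        \<delta>' z = (\<integral> t. of_real t / (- z * (1 + \<delta> z * of_real t)) \<partial>\<nu>')"
  shows "\<forall>R. R \<subseteq> {z. Im z > 0} \<and> bounded R \<and> (\<exists>\<epsilon>>0. \<forall>z\<in>R. \<epsilon> \<le> \<bar>Re z\<bar>) \<longrightarrow>
           (\<exists>M::real. \<forall>z\<in>R. \<forall>l\<in>{1::nat, 2}.
              (\<integral>\<^sup>+ t. ennreal (t ^ l / (cmod (1 + \<delta>' z * of_real t))\<^sup>2) \<partial>\<nu>) \<le> ennreal M \<and>
              (\<integral>\<^sup>+ t. ennreal (t ^ l / (cmod (1 + \<delta> z * of_real t))\<^sup>2) \<partial>\<nu>') \<le> ennreal M)"
proof (intro allI impI)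
  fix R :: "complex set"
  assume "R \<subseteq> {z. Im z > 0} \<and> bounded R \<and> (\<exists>\<epsilon>>0. \<forall>z\<in>R. \<epsilon> \<le> \<bar>Re z\<bar>)"
  then obtain \<epsilon> where R: "R \<subseteq> {z. Im z > 0}" "bounded R" "0 < \<epsilon>" "\<And>z. z \<in> R \<Longrightarrow> \<epsilon> \<le> \<bar>Re z\<bar>"
    by blast
  have \<nu>: "nonneg_real_distribution \<nu>" and \<nu>': "nonneg_real_distribution \<nu>'"
    using nu_prob nu_sets nu_pos nu'_prob nu'_sets nu'_pos
    by (simp_all add: nonneg_real_distribution_def nonneg_real_distribution_axioms_def
        real_distribution_def real_distribution_axioms_def)
  have sol: "coupled_solution \<nu> \<nu>' c 1 z (\<delta> z) (\<delta>' z)" if "z \<in> R" for z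
  proof -
    have z: "Im z > 0"
      using that R(1) by auto
    show ?thesis
      using delta_im[OF z] delta'_eq[OF z]
      by (intro coupled_solutionI[OF \<nu> \<nu>' c_pos zero_less_one z _ _ delta_eq[OF z]]) auto
  qed
  show "\<exists>M::real. \<forall>z\<in>R. \<forall>l\<in>{1::nat, 2}.
      (\<integral>\<^sup>+ t. ennreal (t ^ l / (cmod (1 + \<delta>' z * of_real t))\<^sup>2) \<partial>\<nu>) \<le> ennreal M \<and>
      (\<integral>\<^sup>+ t. ennreal (t ^ l / (cmod (1 + \<delta> z * of_real t))\<^sup>2) \<partial>\<nu>') \<le> ennreal M"
    by (rule bounded_nn_resolvent_moments_off_imaginary_axis[OF nu_ne nu'_ne sol R(2-4)])
qed

end
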